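(* Let $W(x,x')=\tfrac12Px\cdot x-Lx\cdot x'+\tfrac12Qx'\cdot x'$ with $P,Q$ real symmetric and $L$ real invertible, let $m\in\mathbb{Z}$ with $m$ even iff $\det L>0$, and assume $\det(S_W-I)\neq0$. Set $\nu(\widehat S_{W,m})=m-\operatorname{Inert}(P+Q-L-L^T)$. Then $$\nu(\widehat S_{W,m})\equiv n+\tfrac1\pi\arg\det(S_W-I)\pmod 2,$$ i.e. $\nu(\widehat S_{W,m})\equiv n \pmod 2$ if $\det(S_W-I)>0$ and $\nu(\widehat S_{W,m})\equiv n+1\pmod 2$ if $\det(S_W-I)<0$.
   Context: $S_W\in\operatorname{Sp}(n)$ is the symplectic matrix generated by $W$: $(x,p)=S_W(x',p')\iff p=\partial_xW(x,x'),\ p'=-\partial_{x'}W(x,x')$. $\widehat S_{W,m}$ is the quadratic Fourier transform $\widehat S_{W,m}\psi(x)=e^{-in\pi/4}(2\pi\hbar)^{-n/2}i^m\sqrt{|\det L|}\int e^{\frac i\hbar W(x,x')}\psi(x')d^nx'$. $\operatorname{Inert}A$ denotes the number of negative eigenvalues of a real symmetric matrix $A$; $\arg$ of a nonzero real number is $0$ if positive and $\pi$ if negative. *)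

theory Defs
  imports "HOL-Analysis.Analysis" "HOL-Computational_Algebra.Polynomial"
begin

definition genW :: "real^'n^'n \<Rightarrow> real^'n^'n \<Rightarrow> real^'n^'n \<Rightarrow> real^'n \<Rightarrow> real^'n \<Rightarrow> real" where
  "genW P L Q x x' = (1/2) * ((P *v x) \<bullet> x) - (L *v x) \<bullet> x' + (1/2) * ((Q *v x') \<bullet> x')"

definition pjoin :: "real^'n \<Rightarrow> real^'n \<Rightarrow> real^('n + 'n)" where
  "pjoin x p = (\<chi> i. case i of Inl j \<Rightarrow> x $ j | Inr j \<Rightarrow> p $ j)"

definition generated_by :: "real^('n+'n)^('n+'n) \<Rightarrow> real^'n^'n \<Rightarrow> real^'n^'n \<Rightarrow> real^'n^'n \<Rightarrow> bool" where
  "generated_by S P L Q \<longleftrightarrow>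
     (\<forall>x p x' p'. (S *v pjoin x' p' = pjoin x p) \<longleftrightarrow>
        (((\<lambda>y. genW P L Q y x') has_derivative (\<lambda>h. p \<bullet> h)) (at x) \<and>
         ((\<lambda>y. genW P L Q x y) has_derivative (\<lambda>h. - (p' \<bullet> h))) (at x')))"

definition charpoly :: "real^'n^'n \<Rightarrow> real poly" where
  "charpoly A = det (\<chi> i j. (if i = j then [:0, 1:] else 0) - [:A $ i $ j:])"

definition Inert :: "real^'n^'n \<Rightarrow> nat" where
  "Inert A = (\<Sum>r\<in>{r. r < 0 \<and> poly (charpoly A) r = 0}. order r (charpoly A))"

definition nu_index :: "int \<Rightarrow> real^'n^'n \<Rightarrow> real^'n^'n \<Rightarrow> real^'n^'n \<Rightarrow> int" where
  "nu_index m P L Q = m - int (Inert (P + Q - L - transpose L))"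

end

theory Submission
  imports Defs
begin

text \<open>Solving the generating relations for \<open>(x, p)\<close> in terms of \<open>(x', p')\<close> writes \<open>S_W - I\<close>
  as a 2\<times>2 block matrix whose Schur complement is \<open>M = P + Q - L - L\<^sup>T\<close>; this gives
  \<open>det L \<cdot> det (S_W - I) = (-1)\<^sup>n det M\<close>. On the other hand the characteristic polynomial of \<open>M\<close>
  has the sign \<open>(-1)\<^sup>n\<close> far to the left and changes sign exactly at its negative roots, counted
  with multiplicity, so \<open>sgn (det M) = (-1)\<^bsup>Inert M\<^esup>\<close>. Since \<open>sgn (det L) = (-1)\<^sup>m\<close>, comparing
  signs yields the parity of \<open>m - Inert M\<close>.\<close>

definition block_matrix :: "'a^'n^'n \<Rightarrow> 'a^'n^'n \<Rightarrow> 'a^'n^'n \<Rightarrow> 'a^'n^'n \<Rightarrow> 'a^('n+'n)^('n+'n)" where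
  "block_matrix A B C D = (\<chi> i j. case i of
       Inl a \<Rightarrow> (case j of Inl b \<Rightarrow> A$a$b | Inr b \<Rightarrow> B$a$b)
     | Inr a \<Rightarrow> (case j of Inl b \<Rightarrow> C$a$b | Inr b \<Rightarrow> D$a$b))"

lemma pjoin_eq_iff: "pjoin a b = pjoin c d \<longleftrightarrow> a = c \<and> b = d"
proof
  assume h: "pjoin a b = pjoin c d"
  have "a$j = c$j" "b$j = d$j" for j
    using h[unfolded pjoin_def vec_eq_iff, rule_format, of "Inl j"]
          h[unfolded pjoin_def vec_eq_iff, rule_format, of "Inr j"] by simp_all
  then show "a = c \<and> b = d" by (simp add: vec_eq_iff)
qed simp

lemma pjoin_components: "v = pjoin (\<chi> j. v$Inl j) (\<chi> j. v$Inr j)"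
  by (simp add: pjoin_def vec_eq_iff split: sum.split)

lemma pjoin_diff: "pjoin a b - pjoin c d = pjoin (a - c) (b - d)"
  by (simp add: pjoin_def vec_eq_iff split: sum.split)

lemma sum_UNIV_Plus:
  "(\<Sum>k\<in>UNIV. f k) = (\<Sum>k\<in>UNIV. f (Inl k)) + (\<Sum>k\<in>UNIV. f (Inr k))"
  for f :: "'a::finite + 'b::finite \<Rightarrow> 'c::comm_monoid_add"
  by (simp add: UNIV_Plus_UNIV[symmetric] sum.Plus[OF finite finite] del: UNIV_Plus_UNIV)

lemma block_matrix_vector_mult:
  "block_matrix A B C D *v pjoin x y = pjoin (A *v x + B *v y) (C *v x + D *v y)"
  unfolding matrix_vector_mult_def block_matrix_def pjoin_def vec_eq_iff
  by (auto simp: sum_UNIV_Plus split: sum.split)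

lemma block_matrix_eqI:
  assumes "\<And>x y. M *v pjoin x y = pjoin (A *v x + B *v y) (C *v x + D *v y)"
  shows "M = block_matrix A B C D"
  unfolding matrix_eq
proof
  fix v show "M *v v = block_matrix A B C D *v v"
    by (subst (1 2) pjoin_components) (simp only: assms block_matrix_vector_mult)
qed

lemma block_matrix_mult:
  fixes A B C D A' B' C' D' :: "'a::semiring_1^'n^'n"
  shows "block_matrix A B C D ** block_matrix A' B' C' D'
     = block_matrix (A ** A' + B ** C') (A ** B' + B ** D') (C ** A' + D ** C') (C ** B' + D ** D')"
  unfolding matrix_matrix_mult_def block_matrix_def vec_eq_iff
  by (auto simp: sum_UNIV_Plus split: sum.split)

lemma transpose_block_matrix:
  "transpose (block_matrix A B C D)
     = block_matrix (transpose A) (transpose C) (transpose B) (transpose D)"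
  by (simp add: block_matrix_def transpose_def vec_eq_iff split: sum.split)

section \<open>Determinants of block matrices\<close>

lemma map_sum_permutes:
  assumes "q permutes (UNIV :: 'a set)"
  shows "map_sum q (id :: 'b \<Rightarrow> 'b) permutes UNIV"
proof -
  have "map_sum q id \<circ> map_sum (inv q) id = (id :: 'a + 'b \<Rightarrow> _)"
       "map_sum (inv q) id \<circ> map_sum q id = (id :: 'a + 'b \<Rightarrow> _)"
    using permutes_inv_o[OF assms] by (simp_all add: map_sum.comp map_sum.id)
  then show ?thesis by (intro bij_imp_permutes) (auto intro: o_bij)
qed

lemma sign_map_sum_id:
  fixes q :: "'a::finite \<Rightarrow> 'a"
  assumes "q permutes UNIV"
  shows "sign (map_sum q (id :: 'b::finite \<Rightarrow> 'b)) = sign q"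
  using assms finite
proof (induct rule: permutes_induct)
  case id
  show ?case by (simp only: map_sum.id sign_id)
next
  case (swap a b p)
  let ?t = "Transposition.transpose (Inl a) (Inl b) :: 'a + 'b \<Rightarrow> _"
  have split: "map_sum (Transposition.transpose a b \<circ> p) (id :: 'b \<Rightarrow> 'b) = ?t \<circ> map_sum p id"
  proof
    fix x :: "'a + 'b"
    show "map_sum (Transposition.transpose a b \<circ> p) id x = (?t \<circ> map_sum p id) x"
      by (cases x) (simp_all add: Transposition.transpose_def)
  qed
  have "permutation (map_sum p (id :: 'b \<Rightarrow> 'b))" "permutation p"
    using map_sum_permutes[OF swap(5)] swap(5) by (auto simp: permutation_permutes)
  then show ?case
    unfolding split using swap(3,4)
    by (simp only: sign_compose permutation_swap_id sign_swap_id) simp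
qed

lemma permutes_fixing_Inr:
  "{p. p permutes UNIV \<and> (\<forall>a. p (Inr a) = Inr a)}
     = (\<lambda>q. map_sum q (id :: 'b \<Rightarrow> 'b)) ` {q :: 'a \<Rightarrow> 'a. q permutes UNIV}"
proof (intro equalityI subsetI)
  fix p :: "'a + 'b \<Rightarrow> 'a + 'b"
  assume "p \<in> {p. p permutes UNIV \<and> (\<forall>a. p (Inr a) = Inr a)}"
  then have perm: "p permutes UNIV" and fix_Inr: "\<And>a. p (Inr a) = Inr a" by auto
  have "isl (p (Inl a))" for a
  proof (cases "p (Inl a)")
    case (Inr b)
    then have "p (Inl a) = p (Inr b)" by (simp add: fix_Inr)
    then show ?thesis using injD[OF permutes_inj[OF perm]] by blast
  qed simp
  then have p_Inl: "p (Inl a) = Inl (projl (p (Inl a)))" for a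
    by simp
  define q where "q a = projl (p (Inl a))" for a
  have p_eq: "p = map_sum q id"
  proof
    fix x show "p x = map_sum q id x" by (cases x) (auto simp: q_def fix_Inr p_Inl[symmetric])
  qed
  have "bij q"
  proof (rule bijI)
    show "inj q"
      by (rule injI) (metis p_Inl q_def permutes_inj[OF perm] injD sum.inject(1))
    show "surj q"
    proof (rule surjI)
      fix y
      show "q (projl (inv p (Inl y))) = y"
        by (metis p_eq permutes_inverses(1)[OF perm] fix_Inr map_sum.simps(1) sum.collapse(1)
                  isl_def sum.disc(2) sum.sel(1) sum.exhaust)
    qed
  qed
  then show "p \<in> (\<lambda>q. map_sum q id) ` {q. q permutes UNIV}"
    using p_eq by (auto simp: permutes_univ bij_iff)
qed (auto intro: map_sum_permutes)

lemma det_block_upper_id: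
  fixes A B :: "'a::comm_ring_1^'n^'n"
  shows "det (block_matrix A B 0 (mat 1)) = det A"
proof -
  let ?M = "block_matrix A B 0 (mat 1)"
  let ?term = "\<lambda>p. of_int (sign p) * (\<Prod>i\<in>UNIV. ?M$i$p i)"
  let ?F = "{p. p permutes UNIV \<and> (\<forall>a. p (Inr a) = Inr a)}"
  have vanish: "?term p = 0" if "p \<in> {p. p permutes UNIV} - ?F" for p
  proof -
    from that obtain a where a: "p (Inr a) \<noteq> Inr a" by auto
    then have "?M $ Inr a $ p (Inr a) = 0"
      by (cases "p (Inr a)") (auto simp: block_matrix_def mat_def)
    then have "(\<Prod>i\<in>UNIV. ?M$i$p i) = 0" by (intro prod_zero) auto
    then show ?thesis by simp
  qed
  have inj: "inj_on (\<lambda>q. map_sum q (id :: 'n \<Rightarrow> 'n)) {q. q permutes UNIV}"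
    by (rule inj_onI) (metis map_sum.simps(1) sum.inject(1) ext)
  have "det ?M = sum ?term ?F"
    unfolding det_def
    by (rule sum.mono_neutral_right[OF _ _ ballI[OF vanish]]) (auto simp: finite_permutations)
  also have "\<dots> = (\<Sum>q | q permutes UNIV. ?term (map_sum q id))"
    unfolding permutes_fixing_Inr by (simp add: sum.reindex[OF inj] o_def)
  also have "\<dots> = (\<Sum>q | q permutes UNIV. of_int (sign q) * (\<Prod>a\<in>UNIV. A$a$q a))"
  proof (rule sum.cong[OF refl])
    fix q :: "'n \<Rightarrow> 'n" assume "q \<in> {q. q permutes UNIV}"
    moreover have "(\<Prod>i\<in>UNIV. ?M$i$map_sum q id i) = (\<Prod>a\<in>UNIV. A$a$q a)"
      unfolding UNIV_Plus_UNIV[symmetric] prod.Plus[OF finite finite]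
      by (simp add: block_matrix_def mat_def o_def del: UNIV_Plus_UNIV)
    ultimately show "?term (map_sum q id) = of_int (sign q) * (\<Prod>a\<in>UNIV. A$a$q a)"
      by (simp add: sign_map_sum_id)
  qed
  also have "\<dots> = det A" unfolding det_def ..
  finally show ?thesis .
qed

lemma det_mat_const: "det (mat c :: 'a::comm_ring_1^'n^'n) = c ^ CARD('n)"
  by (simp add: det_diagonal mat_def)

lemma mat_neg_one_mult: "(- mat 1) ** (A :: 'a::comm_ring_1^'n^'m) = - A"
  by (simp add: matrix_matrix_mult_def mat_def vec_eq_iff if_distrib if_distribR
                sum.delta' cong: if_cong)

lemma det_minus: "det (- A :: 'a::comm_ring_1^'n^'n) = (-1) ^ CARD('n) * det A"
proof -
  have "(- mat 1 :: 'a^'n^'n) = mat (-1)" by (simp add: vec_eq_iff mat_def)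
  then show ?thesis by (metis mat_neg_one_mult det_mul det_mat_const)
qed

lemma det_block_lower_id:
  fixes A C :: "'a::comm_ring_1^'n^'n"
  shows "det (block_matrix A 0 C (mat 1)) = det A"
proof -
  have "transpose (0 :: 'a^'n^'n) = 0" by (simp add: transpose_def vec_eq_iff)
  then show ?thesis
    by (metis transpose_block_matrix det_block_upper_id det_transpose transpose_mat)
qed

lemma det_block_antidiag_id:
  "det (block_matrix 0 (mat 1) (mat 1) 0 :: 'a::comm_ring_1^('n::finite+'n)^('n+'n)) = (-1) ^ CARD('n)"
proof -
  let ?I = "mat 1 :: 'a^'n^'n"
  have "block_matrix 0 ?I ?I 0
          = block_matrix ?I ?I 0 ?I ** block_matrix ?I 0 (- ?I) ?I ** block_matrix ?I ?I 0 ?I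
            ** block_matrix (- ?I) 0 0 ?I"
    by (simp add: block_matrix_mult mat_neg_one_mult)
  then show ?thesis
    by (simp add: det_mul det_block_upper_id det_block_lower_id det_minus)
qed

lemma det_block_diag_id:
  fixes D :: "'a::comm_ring_1^'n^'n"
  shows "det (block_matrix (mat 1) 0 0 D) = det D"
proof -
  let ?J = "block_matrix 0 (mat 1) (mat 1) 0 :: 'a^('n+'n)^('n+'n)"
  have "block_matrix (mat 1) 0 0 D = ?J ** block_matrix D 0 0 (mat 1) ** ?J"
    by (simp add: block_matrix_mult)
  then have "det (block_matrix (mat 1) 0 0 D) = (det ?J * det ?J) * det D"
    by (simp add: det_mul det_block_upper_id)
  then show ?thesis by (simp add: det_block_antidiag_id flip: power_add)
qed

lemma det_block_lower_triangular:
  fixes A C D :: "'a::comm_ring_1^'n^'n"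
  shows "det (block_matrix A 0 C D) = det A * det D"
proof -
  have "block_matrix A 0 C D = block_matrix A 0 C (mat 1) ** block_matrix (mat 1) 0 0 D"
    by (simp add: block_matrix_mult)
  then show ?thesis by (simp add: det_mul det_block_lower_id det_block_diag_id)
qed

section \<open>The symplectic matrix generated by \<open>W\<close>\<close>

lemma has_derivative_matrix_vector_mult[derivative_intros]:
  "(g has_derivative g') F \<Longrightarrow> ((\<lambda>y. (A::real^'n^'m) *v g y) has_derivative (\<lambda>h. A *v g' h)) F"
  by (rule bounded_linear.has_derivative[OF matrix_vector_mul_bounded_linear])

lemma inner_symmetric_matrix:
  assumes "transpose P = P"
  shows "x \<bullet> (P *v y) = y \<bullet> (P *v (x::real^'n))"
  by (metis assms dot_lmul_matrix inner_commute vector_transpose_matrix)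

lemma genW_has_derivative_left:
  fixes P L Q :: "real^'n^'n"
  assumes "transpose P = P"
  shows "((\<lambda>y. genW P L Q y x') has_derivative (\<lambda>h. (P *v x - transpose L *v x') \<bullet> h)) (at x)"
  unfolding genW_def
  apply (rule has_derivative_eq_rhs)
   apply (rule derivative_eq_intros refl | simp)+
  using inner_symmetric_matrix[OF assms, of x] dot_lmul_matrix[of x' L]
  by (auto simp: inner_diff_right inner_commute)

lemma genW_has_derivative_right:
  fixes P L Q :: "real^'n^'n"
  assumes "transpose Q = Q"
  shows "((\<lambda>y. genW P L Q x y) has_derivative (\<lambda>h. - ((L *v x - Q *v x') \<bullet> h))) (at x')"
  unfolding genW_def
  apply (rule has_derivative_eq_rhs)
   apply (rule derivative_eq_intros refl | simp)+
  using inner_symmetric_matrix[OF assms, of x']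
  by (auto simp: inner_diff_right inner_commute)

lemma generated_by_minus_id:
  fixes P L Q L' :: "real^'n^'n" and S :: "real^('n+'n)^('n+'n)"
  assumes "transpose P = P" and "transpose Q = Q"
    and "L ** L' = mat 1"
    and "generated_by S P L Q"
  shows "S - mat 1 = block_matrix (L' ** Q - mat 1) L' (P ** L' ** Q - transpose L) (P ** L' - mat 1)"
proof (rule block_matrix_eqI)
  fix x' p' :: "real^'n"
  define x where "x = L' *v (p' + Q *v x')"
  define p where "p = P *v x - transpose L *v x'"
  have "L *v x = p' + Q *v x'"
    unfolding x_def matrix_vector_mul_assoc assms(3) by simp
  then have "((\<lambda>y. genW P L Q x y) has_derivative (\<lambda>h. - (p' \<bullet> h))) (at x')"
    using genW_has_derivative_right[OF assms(2), of P L x x'] by simp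
  moreover have "((\<lambda>y. genW P L Q y x') has_derivative (\<lambda>h. p \<bullet> h)) (at x)"
    unfolding p_def by (rule genW_has_derivative_left[OF assms(1)])
  ultimately have "S *v pjoin x' p' = pjoin x p"
    using assms(4) unfolding generated_by_def by blast
  then have "(S - mat 1) *v pjoin x' p' = pjoin (x - x') (p - p')"
    by (simp add: matrix_vector_mult_diff_rdistrib pjoin_diff)
  also have "\<dots> = pjoin ((L' ** Q - mat 1) *v x' + L' *v p')
                        ((P ** L' ** Q - transpose L) *v x' + (P ** L' - mat 1) *v p')"
    unfolding pjoin_eq_iff x_def p_def
    by (simp add: algebra_simps matrix_vector_mul_assoc[symmetric])
  finally show "(S - mat 1) *v pjoin x' p' = \<dots>" .
qed

lemma matrix_diff_ldistrib: "(A::'a::ring_1^'n^'m) ** (B - C) = A ** B - A ** C"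
  by (simp add: matrix_matrix_mult_def vec_eq_iff algebra_simps sum_subtractf)

lemma matrix_diff_rdistrib: "((A::'a::ring_1^'n^'m) - B) ** C = A ** C - B ** C"
  by (simp add: matrix_matrix_mult_def vec_eq_iff algebra_simps sum_subtractf)

lemma matrix_add_rdistrib: "((A::'a::ring_1^'n^'m) + B) ** C = A ** C + B ** C"
  by (simp add: matrix_matrix_mult_def vec_eq_iff algebra_simps sum.distrib)

lemma det_generated_by_minus_id:
  fixes P L Q :: "real^'n^'n" and S :: "real^('n+'n)^('n+'n)"
  assumes "transpose P = P" and "transpose Q = Q"
    and "invertible L"
    and "generated_by S P L Q"
  shows "det L * det (S - mat 1) = (-1) ^ CARD('n) * det (P + Q - L - transpose L)"
proof -
  obtain L' where LL': "L ** L' = mat 1" and L'L: "L' ** L = mat 1"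
    using assms(3) unfolding invertible_def by blast
  let ?I = "mat 1 :: real^'n^'n"
  let ?A = "L' ** Q - ?I" and ?C = "P ** L' ** Q - transpose L" and ?D = "P ** L' - ?I"
  let ?K = "L ** ?A"
  have "P ** L' ** L = P" by (metis L'L matrix_mul_assoc matrix_mul_rid)
  then have schur: "?C - ?D ** ?K = P + Q - L - transpose L"
    by (simp add: matrix_diff_ldistrib matrix_diff_rdistrib matrix_add_ldistrib
                  matrix_add_rdistrib matrix_mul_assoc LL' L'L)
  have "block_matrix ?A L' ?C ?D
          = block_matrix L' 0 ?D (?C - ?D ** ?K) ** block_matrix 0 ?I ?I 0 ** block_matrix ?I 0 ?K ?I"
    by (simp add: block_matrix_mult matrix_mul_assoc L'L)
  then have "det (S - mat 1) = det L' * det (P + Q - L - transpose L) * (-1) ^ CARD('n)"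
    by (simp add: generated_by_minus_id[OF assms(1,2) LL' assms(4)] schur det_mul
                  det_block_lower_triangular det_block_antidiag_id det_block_lower_id)
  moreover have "det L * det L' = 1" using det_mul[of L L'] LL' by simp
  ultimately show ?thesis by (simp add: algebra_simps)
qed

section \<open>The sign of a determinant and the negative eigenvalues\<close>

definition count_neg_roots :: "real poly \<Rightarrow> nat" where
  "count_neg_roots p = (\<Sum>r\<in>{r. r < 0 \<and> poly p r = 0}. order r p)"

lemma count_neg_roots_linear_mult:
  assumes "r < 0" and "q \<noteq> 0"
  shows "count_neg_roots ([:-r, 1:] * q) = count_neg_roots q + 1"
proof -
  define p where "p = [:-r, 1:] * q"
  let ?R = "{s. s < 0 \<and> poly p s = 0}"
  have "p \<noteq> 0" using assms(2) unfolding p_def by (metis mult_eq_0_iff pCons_eq_0_iff one_neq_zero)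
  have fin: "finite ?R"
    using poly_roots_finite[OF \<open>p \<noteq> 0\<close>] by (rule finite_subset[rotated]) auto
  have "order s p = order s q + (if s = r then 1 else 0)" for s
    using order_mult[OF \<open>p \<noteq> 0\<close>[unfolded p_def], of s] order_power_n_n[of r 1]
          order_0I[of "[:-r, 1:]" s]
    by (auto simp: p_def)
  moreover have "r \<in> ?R" using assms(1) by (simp add: p_def)
  ultimately have "count_neg_roots p = (\<Sum>s\<in>?R. order s q) + 1"
    unfolding count_neg_roots_def by (simp add: sum.distrib sum.delta[OF fin])
  moreover have "count_neg_roots q = (\<Sum>s\<in>?R. order s q)"
    unfolding count_neg_roots_def
    by (rule sum.mono_neutral_left[OF fin]) (auto simp: order_0I p_def)
  ultimately show ?thesis by (simp add: p_def)
qed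

text \<open>Between \<open>x\<close> and \<open>0\<close> the polynomial changes sign exactly at its negative roots of odd
  multiplicity; peeling off one linear factor at a time makes this an induction on the degree.\<close>

lemma sgn_poly_below_neg_roots:
  fixes p :: "real poly"
  assumes "poly p 0 \<noteq> 0" and "\<And>r. poly p r = 0 \<Longrightarrow> r < 0 \<Longrightarrow> x < r" and "x < 0"
  shows "sgn (poly p x) = sgn (poly p 0) * (-1) ^ count_neg_roots p"
  using assms(1,2)
proof (induct "degree p" arbitrary: p rule: less_induct)
  case less
  show ?case
  proof (cases "\<exists>r. r < 0 \<and> poly p r = 0")
    case False
    then have no_roots: "count_neg_roots p = 0"
      unfolding count_neg_roots_def by (intro sum.neutral) auto
    have nonzero: "poly p y \<noteq> 0" if "x \<le> y" "y \<le> 0" for y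
      using False less.prems(1) that by (cases "y = 0") auto
    then have "\<not> poly p x * poly p 0 < 0"
      using poly_IVT[OF assms(3), of p] by fastforce
    then have "sgn (poly p x) = sgn (poly p 0)"
      using nonzero[of x] less.prems(1) assms(3) by (auto simp: sgn_if mult_less_0_iff)
    then show ?thesis by (simp add: no_roots)
  next
    case True
    then obtain r where r: "r < 0" "poly p r = 0" by blast
    obtain q where pq: "p = [:-r, 1:] * q" using r(2) poly_eq_0_iff_dvd by (metis dvdE)
    have "q \<noteq> 0" using less.prems(1) pq by auto
    then have "degree q < degree p" unfolding pq by (subst degree_mult_eq) auto
    moreover have "poly q 0 \<noteq> 0" "\<And>s. poly q s = 0 \<Longrightarrow> s < 0 \<Longrightarrow> x < s"
      using less.prems pq by auto
    ultimately have IH: "sgn (poly q x) = sgn (poly q 0) * (-1) ^ count_neg_roots q"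
      using less.hyps by blast
    have "poly p x = (x - r) * poly q x" and "poly p 0 = - r * poly q 0"
      by (simp_all add: pq algebra_simps)
    moreover have "x < r" using less.prems(2) r by blast
    ultimately have "sgn (poly p x) = - sgn (poly q x)" and "sgn (poly p 0) = sgn (poly q 0)"
      using r(1) by (simp_all add: sgn_mult)
    then show ?thesis
      using IH count_neg_roots_linear_mult[OF r(1) \<open>q \<noteq> 0\<close>] by (simp add: pq)
  qed
qed

lemma poly_det: "poly (det A) x = det (\<chi> i j. poly (A$i$j) x)"
  by (simp add: det_def poly_sum poly_prod)

lemma poly_charpoly: "poly (charpoly M) x = det (mat x - M)"
  unfolding charpoly_def poly_det by (rule arg_cong[where f=det]) (auto simp: vec_eq_iff mat_def)

lemma det_scaleR: "det (c *\<^sub>R A :: real^'n^'n) = c ^ CARD('n) * det A"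
proof -
  have "mat c = c *\<^sub>R (mat 1 :: real^'n^'n)" by (simp add: vec_eq_iff mat_def)
  then have "c *\<^sub>R A = mat c ** A" using scalar_matrix_assoc[of c "mat 1" A] by simp
  then show ?thesis by (simp add: det_mul det_mat_const)
qed

lemma eventually_det_mat_plus_pos:
  fixes M :: "real^'n^'n"
  shows "\<exists>T>0. \<forall>t\<ge>T. det (mat t + M) > 0"
proof -
  let ?g = "\<lambda>s::real. det (mat 1 + s *\<^sub>R M)"
  have g: "?g = (\<lambda>s. \<Sum>p | p permutes UNIV.
                    of_int (sign p) * (\<Prod>i\<in>UNIV. (if i = p i then 1 else 0) + s * M$i$p i))"
    by (simp add: det_def mat_def)
  have "isCont ?g 0" unfolding g by (intro continuous_intros)
  then have "(?g \<longlongrightarrow> ?g 0) (at 0)" by (simp add: isCont_def)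
  then have "\<forall>\<^sub>F s in at 0. ?g s > 0" by (rule order_tendstoD) simp
  then obtain d where d: "d > 0" "\<And>s. s \<noteq> 0 \<Longrightarrow> dist s 0 < d \<Longrightarrow> ?g s > 0"
    unfolding eventually_at by auto
  show ?thesis
  proof (intro exI[of _ "2/d"] conjI allI impI)
    fix t :: real assume t: "2/d \<le> t"
    then have "t > 0" using d(1) by (metis divide_pos_pos order_less_le_trans zero_less_numeral)
    then have "1/t < d" using t d(1) by (simp add: field_simps)
    then have "?g (1/t) > 0" using \<open>t > 0\<close> by (intro d(2)) auto
    moreover have "mat t + M = t *\<^sub>R (mat 1 + (1/t) *\<^sub>R M)"
      using \<open>t > 0\<close> by (simp add: vec_eq_iff mat_def algebra_simps)
    ultimately show "det (mat t + M) > 0"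
      using \<open>t > 0\<close> by (simp add: det_scaleR)
  qed (use d in simp)
qed

lemma neg_one_power_mult_eq_iff: "((-1::'a::ring_1) ^ k * s = t) \<longleftrightarrow> s = (-1) ^ k * t"
proof -
  have "(-1) ^ k * ((-1) ^ k * x) = x" for x :: 'a
    by (simp flip: mult.assoc power_add)
  then show ?thesis by metis
qed

lemma sgn_det_eq_neg_one_power_Inert:
  fixes M :: "real^'n^'n"
  assumes "det M \<noteq> 0"
  shows "sgn (det M) = (-1) ^ Inert M"
proof -
  define p where "p = charpoly M"
  have p0: "poly p 0 = (-1) ^ CARD('n) * det M"
    unfolding p_def poly_charpoly by (simp add: det_minus)
  then have "p \<noteq> 0" using assms by auto
  obtain T where T: "T > 0" "\<And>t. t \<ge> T \<Longrightarrow> det (mat t + M) > 0"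
    using eventually_det_mat_plus_pos by blast
  define x where "x = - T - 1 - (\<Sum>r | poly p r = 0. \<bar>r\<bar>)"
  have "(\<Sum>r | poly p r = 0. \<bar>r\<bar>) \<ge> 0" by (simp add: sum_nonneg)
  then have x: "x < 0" "T \<le> -x" unfolding x_def using T(1) by linarith+
  have below_roots: "x < r" if "poly p r = 0" for r
  proof -
    have "\<bar>r\<bar> \<le> (\<Sum>r | poly p r = 0. \<bar>r\<bar>)"
      using poly_roots_finite[OF \<open>p \<noteq> 0\<close>] that by (intro member_le_sum) auto
    then show ?thesis unfolding x_def using T(1) by linarith
  qed
  have "mat x - M = - (mat (-x) + M)" by (simp add: vec_eq_iff mat_def)
  then have "poly p x = (-1) ^ CARD('n) * det (mat (-x) + M)"
    unfolding p_def poly_charpoly by (simp only: det_minus)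
  then have "sgn (poly p x) = (-1) ^ CARD('n)"
    using T(2)[OF x(2)] by (simp add: sgn_mult)
  moreover have "sgn (poly p x) = sgn (poly p 0) * (-1) ^ count_neg_roots p"
    using assms p0 below_roots x(1) by (intro sgn_poly_below_neg_roots) auto
  moreover have "count_neg_roots p = Inert M"
    unfolding count_neg_roots_def Inert_def p_def ..
  ultimately have "(-1) ^ Inert M * sgn (det M) = 1"
    by (simp add: p0 sgn_mult mult_ac)
  then show ?thesis by (simp add: neg_one_power_mult_eq_iff)
qed

lemma parity_from_sign:
  fixes s :: real and m :: int and n k :: nat
  assumes "(if even m then 1 else -1) * s = (-1) ^ (n + k)"
  shows "(s > 0 \<longrightarrow> (m - int k) mod 2 = int n mod 2) \<and>
         (s < 0 \<longrightarrow> (m - int k) mod 2 = (int n + 1) mod 2)"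
proof -
  have "s = (if even m then 1 else -1) * (-1) ^ (n + k)"
    using assms by (auto split: if_splits)
  then show ?thesis
    unfolding minus_one_power_iff even_iff_mod_2_eq_zero
    by (auto split: if_splits) presburger+
qed

theorem mainTheorem5:
  fixes P L Q :: "real^'n^'n" and S :: "real^('n+'n)^('n+'n)" and m :: int
  assumes "transpose P = P" and "transpose Q = Q"
    and "invertible L"
    and "even m \<longleftrightarrow> det L > 0"
    and "generated_by S P L Q"
    and "det (S - mat 1) \<noteq> 0"
  shows "(det (S - mat 1) > 0 \<longrightarrow> nu_index m P L Q mod 2 = int CARD('n) mod 2) \<and>
         (det (S - mat 1) < 0 \<longrightarrow> nu_index m P L Q mod 2 = (int CARD('n) + 1) mod 2)"
proof -
  let ?M = "P + Q - L - transpose L"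
  have det: "det L * det (S - mat 1) = (-1) ^ CARD('n) * det ?M"
    using det_generated_by_minus_id[OF assms(1-3,5)] .
  have "det L \<noteq> 0" using assms(3) by (simp add: invertible_det_nz)
  then have "det ?M \<noteq> 0" using det assms(6) by auto
  then have "sgn (det ?M) = (-1) ^ Inert ?M" by (rule sgn_det_eq_neg_one_power_Inert)
  moreover have "sgn (det L) = (if even m then 1 else -1)"
    using assms(4) \<open>det L \<noteq> 0\<close> by (auto simp: sgn_if)
  ultimately have "(if even m then 1 else -1) * sgn (det (S - mat 1)) = (-1) ^ (CARD('n) + Inert ?M)"
    using arg_cong[OF det, of sgn] by (simp add: sgn_mult power_add)
  from parity_from_sign[OF this] show ?thesis
    unfolding nu_index_def by (simp add: sgn_greater sgn_less)
qed

end
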